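(* Let $a\in S^1$ with $a\notin\{0,\tfrac12,\tfrac14,-\tfrac14\}$ and let $W=\{0,a,\tfrac12,a+\tfrac12\}$. Then $P(W)$ holds.
   Context: Identify $S^1$ with $\mathbb{R}/\mathbb{Z}$. The group $O(2)$ acts on $S^1$ by translations $x\mapsto x+a$ and reflections $x\mapsto -x+2a$. A coloring $c:S^1\to\{R,B\}$ is distinguishing if no non-identity $\gamma\in O(2)$ satisfies $c\circ\gamma=c$. For $W\subset S^1$ with trivial pointwise stabilizer in $O(2)$, $P(W)$ holds if every precoloring $c:S^1\setminus W\to\{R,B\}$ extends to a distinguishing coloring of $S^1$. *)

theory Defs
  imports Complex_Main
begin

text \<open>The circle S^1 = R/Z is modelled by real numbers modulo the integers:
  a point of S^1 is a real number, two reals denote the same point iff their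
  difference is an integer, and functions on S^1 are 1-periodic functions on R.\<close>

definition circ_eq :: "real \<Rightarrow> real \<Rightarrow> bool" where
  "circ_eq x y \<longleftrightarrow> x - y \<in> \<int>"

definition periodic1 :: "(real \<Rightarrow> 'b) \<Rightarrow> bool" where
  "periodic1 f \<longleftrightarrow> (\<forall>x. f (x + 1) = f x)"

datatype color = R | B

text \<open>Elements of O(2): (False, t) is the translation x \<mapsto> x + t,
  (True, t) is the reflection x \<mapsto> -x + 2t.\<close>

type_synonym o2 = "bool \<times> real"

definition o2_act :: "o2 \<Rightarrow> real \<Rightarrow> real" where
  "o2_act g x = (if fst g then - x + 2 * snd g else x + snd g)"

definition o2_is_id :: "o2 \<Rightarrow> bool" where
  "o2_is_id g \<longleftrightarrow> (\<forall>x. circ_eq (o2_act g x) x)"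

definition distinguishing :: "(real \<Rightarrow> color) \<Rightarrow> bool" where
  "distinguishing c \<longleftrightarrow>
     (\<forall>g. \<not> o2_is_id g \<longrightarrow> \<not> (\<forall>x. c (o2_act g x) = c x))"

definition in_circ_set :: "real \<Rightarrow> real set \<Rightarrow> bool" where
  "in_circ_set x W \<longleftrightarrow> (\<exists>w\<in>W. circ_eq x w)"

definition trivial_pw_stab :: "real set \<Rightarrow> bool" where
  "trivial_pw_stab W \<longleftrightarrow>
     (\<forall>g. (\<forall>w\<in>W. circ_eq (o2_act g w) w) \<longrightarrow> o2_is_id g)"

definition prop_P :: "real set \<Rightarrow> bool" where
  "prop_P W \<longleftrightarrow> trivial_pw_stab W \<and>
     (\<forall>p :: real \<Rightarrow> color. periodic1 p \<longrightarrow>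
        (\<exists>c. periodic1 c \<and> (\<forall>x. \<not> in_circ_set x W \<longrightarrow> c x = p x) \<and>
             distinguishing c))"

end

theory Submission
  imports Defs
begin

text \<open>
  Let W = {0, a, 1/2, a + 1/2} with 4a \<notin> Z (this is what the hypotheses on a
  amount to). Given a precoloring p of S^1 \<setminus> W, colour 0 with e \<in> {R, B}, 1/2 with B
  and both a and a + 1/2 with d \<in> {R, B}; we show that one of these four extensions
  col e d is distinguishing.

  The proof only looks at two sets every symmetry of a coloring must preserve:
  the points x showing the colours (R, B), resp. (R, R), at x and at its antipode
  x + 1/2. The first set depends only on e (which adds the class of 0 or not), the
  second only on d (which adds the pair {a, a + 1/2} or not). A general exchange
  lemma for sets Y \<subseteq> Y \<union> E, one invariant under a translation and the other under
  an element g of O(2), produces a point of E mapped into E by g. Used with E = Z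
  it forces reflections through (1/2)Z, used with E = {a, a + 1/2} it forces
  reflections through a + (1/4)Z, and these two conditions are incompatible.
\<close>

text \<open>An integer combination of integers is an integer; this is how all congruences
  modulo 1 below are verified, the identity itself being checked by simp.\<close>
lemma Ints_combination:
  fixes u v w :: "'a::ring_1"
  assumes "u \<in> \<int>" "v \<in> \<int>" "w = of_int i * u + of_int j * v + of_int k"
  shows "w \<in> \<int>"
  using assms by simp

lemma double_in_Ints_iff: "2 * y \<in> \<int> \<longleftrightarrow> y \<in> \<int> \<or> y - 1/2 \<in> \<int>"
  for y :: real
proof
  assume "2 * y \<in> \<int>"
  then obtain n where n: "2 * y = of_int n" by (elim Ints_cases)
  obtain k where "n = 2 * k \<or> n = 2 * k + 1" by (metis evenE oddE)
  then show "y \<in> \<int> \<or> y - 1/2 \<in> \<int>"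
  proof
    assume "n = 2 * k"
    then have "y = of_int k" using n by simp
    then show ?thesis by simp
  next
    assume "n = 2 * k + 1"
    then have "y - 1/2 = of_int k" using n by simp
    then show ?thesis by (metis Ints_of_int)
  qed
next
  assume "y \<in> \<int> \<or> y - 1/2 \<in> \<int>"
  moreover have "2 * y = 2 * (y - 1/2) + 1" by simp
  ultimately show "2 * y \<in> \<int>" by (metis Ints_1 Ints_add Ints_mult Ints_numeral)
qed

lemma four_times_not_Int:
  fixes a :: real
  assumes "a \<notin> \<int>" "a - 1/2 \<notin> \<int>" "a - 1/4 \<notin> \<int>" "a + 1/4 \<notin> \<int>"
  shows "4 * a \<notin> \<int>"
proof
  assume "4 * a \<in> \<int>"
  then have "2 * (2 * a) \<in> \<int>" by simp
  then consider "2 * a \<in> \<int>" | "2 * (a - 1/4) \<in> \<int>" using double_in_Ints_iff by fastforce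
  then show False
  proof cases
    case 1
    then show False using assms(1,2) double_in_Ints_iff by blast
  next
    case 2
    then have "a - 1/4 - 1/2 \<in> \<int>" using assms(3) double_in_Ints_iff by blast
    then have "a + 1/4 \<in> \<int>"
      by (rule Ints_combination[OF _ Ints_1, where i = 1 and j = 1 and k = 0]) simp
    then show False using assms(4) by blast
  qed
qed

lemma periodic1_int:
  assumes "periodic1 f" shows "f (x + of_int n) = f x"
proof (induction n rule: int_induct[where k = 0])
  case (step1 i)
  have "f (x + of_int (i + 1)) = f ((x + of_int i) + 1)" by (simp add: algebra_simps)
  with step1 assms show ?case by (simp add: periodic1_def)
next
  case (step2 i)
  have "f ((x + of_int (i - 1)) + 1) = f (x + of_int (i - 1))"
    using assms by (simp only: periodic1_def)
  then show ?case using step2 by (simp add: algebra_simps)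
qed simp

lemma periodic1_cong:
  assumes "periodic1 f" "x - y \<in> \<int>" shows "f x = f y"
  using assms(2) periodic1_int[OF assms(1), of y] by (elim Ints_cases) (simp add: algebra_simps)

lemma o2_act_translation [simp]: "o2_act (False, t) x = x + t"
  by (simp add: o2_act_def)

lemma o2_act_reflection [simp]: "o2_act (True, s) x = - x + 2 * s"
  by (simp add: o2_act_def)

lemma translation_is_id_iff: "o2_is_id (False, t) \<longleftrightarrow> t \<in> \<int>"
  by (simp add: o2_is_id_def circ_eq_def)

lemma reflection_not_id: "\<not> o2_is_id (True, s)"
proof
  assume "o2_is_id (True, s)"
  then have "o2_act (True, s) (s - 1/4) - (s - 1/4) \<in> \<int>"
    by (simp only: o2_is_id_def circ_eq_def)
  then show False by simp
qed

lemma o2_act_shift: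
  "(\<forall>x. o2_act g (x + t) = o2_act g x + t) \<or> (\<forall>x. o2_act g (x + t) = o2_act g x - t)"
  by (cases g; cases "fst g") (auto simp: o2_act_def)

lemma o2_act_antipode: "o2_act g (x + 1/2) - (o2_act g x + 1/2) \<in> \<int>"
  by (cases g; cases "fst g") (auto simp: o2_act_def)

lemma integer_return_is_reflection:
  assumes "x \<in> \<int>" "o2_act g x \<in> \<int>" "\<not> o2_is_id g"
  shows "\<exists>s. g = (True, s) \<and> 2 * s \<in> \<int>"
proof (cases g)
  case (Pair b s)
  show ?thesis
  proof (cases b)
    case False
    then have "s \<in> \<int>" using assms(1,2) Pair by simp
    then show ?thesis using assms(3) Pair False translation_is_id_iff by simp
  next
    case True
    then have "2 * s \<in> \<int>" using assms(1,2) Pair by simp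
    then show ?thesis using Pair True by blast
  qed
qed

definition o2_invariant :: "o2 \<Rightarrow> real set \<Rightarrow> bool" where
  "o2_invariant g S \<longleftrightarrow> (\<forall>x. o2_act g x \<in> S \<longleftrightarrow> x \<in> S)"

lemma reflections_compose:
  assumes "o2_invariant (True, s1) S" "o2_invariant (True, s2) S"
  shows "o2_invariant (False, 2 * s1 - 2 * s2) S"
  unfolding o2_invariant_def
proof
  fix x
  have "x + (2 * s1 - 2 * s2) = - (- x + 2 * s2) + 2 * s1" by simp
  then show "o2_act (False, 2 * s1 - 2 * s2) x \<in> S \<longleftrightarrow> x \<in> S"
    using assms unfolding o2_invariant_def by (metis o2_act_reflection o2_act_translation)
qed

definition nontrivial_symmetry :: "(real \<Rightarrow> color) \<Rightarrow> o2 \<Rightarrow> bool" where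
  "nontrivial_symmetry c g \<longleftrightarrow> \<not> o2_is_id g \<and> (\<forall>x. c (o2_act g x) = c x)"

lemma distinguishing_iff: "distinguishing c \<longleftrightarrow> (\<nexists>g. nontrivial_symmetry c g)"
  by (auto simp: distinguishing_def nontrivial_symmetry_def)

text \<open>The points where c shows the colour pair (u, v) at a point and its antipode.
  Every symmetry of c preserves these sets, which is the only information about
  symmetries used in the proof.\<close>
definition antipodal_pattern :: "(real \<Rightarrow> color) \<Rightarrow> color \<Rightarrow> color \<Rightarrow> real set" where
  "antipodal_pattern c u v = {x. c x = u \<and> c (x + 1/2) = v}"

lemma antipodal_pattern_periodic:
  assumes "periodic1 c" "x - y \<in> \<int>"
  shows "x \<in> antipodal_pattern c u v \<longleftrightarrow> y \<in> antipodal_pattern c u v"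
proof -
  have "(x + 1/2) - (y + 1/2) \<in> \<int>" using assms(2) by simp
  then have "c (x + 1/2) = c (y + 1/2)" using periodic1_cong[OF assms(1)] by blast
  moreover have "c x = c y" using periodic1_cong[OF assms] .
  ultimately show ?thesis by (simp add: antipodal_pattern_def)
qed

lemma symmetry_preserves_pattern:
  assumes "periodic1 c" "\<forall>x. c (o2_act g x) = c x"
  shows "o2_invariant g (antipodal_pattern c u v)"
proof -
  have "c (o2_act g x + 1/2) = c (x + 1/2)" for x
    using periodic1_cong[OF assms(1) o2_act_antipode[of g x]] assms(2) by simp
  then show ?thesis
    using assms(2) by (simp add: o2_invariant_def antipodal_pattern_def)
qed

lemma exchange_union_shift_invariant:
  fixes g :: "'a::ab_group_add \<Rightarrow> 'a"
  assumes disj: "Y \<inter> E = {}" and e: "e \<in> E" "e + t \<notin> E"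
    and shift: "\<And>x. x + t \<in> Y \<union> E \<longleftrightarrow> x \<in> Y \<union> E"
    and g: "\<And>x. g x \<in> Y \<longleftrightarrow> x \<in> Y"
    and comm: "(\<forall>x. g (x + t) = g x + t) \<or> (\<forall>x. g (x + t) = g x - t)"
  shows "\<exists>x\<in>E. g x \<in> E"
proof (rule ccontr)
  assume none: "\<not> ?thesis"
  have "e + t \<in> Y" using shift[of e] e by blast
  then have "g (e + t) \<in> Y" using g by blast
  then have "g e + t \<in> Y \<or> g e - t \<in> Y" using comm by force
  then have "g e \<in> Y \<union> E" using shift[of "g e"] shift[of "g e - t"] by auto
  moreover have "g e \<notin> Y" using g e disj by blast
  ultimately show False using none e by blast
qed

lemma exchange_part_shift_invariant:
  fixes g :: "'a::ab_group_add \<Rightarrow> 'a"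
  assumes disj: "Y \<inter> E = {}" and e: "e \<in> E" "e + t \<notin> E"
    and shift: "\<And>x. x + t \<in> Y \<longleftrightarrow> x \<in> Y"
    and g: "\<And>x. g x \<in> Y \<union> E \<longleftrightarrow> x \<in> Y \<union> E"
    and comm: "(\<forall>x. g (x + t) = g x + t) \<or> (\<forall>x. g (x + t) = g x - t)"
  shows "\<exists>x\<in>E. g x \<in> E"
proof (rule ccontr)
  assume none: "\<not> ?thesis"
  have "g e \<in> Y" using g[of e] e none by blast
  then have "g e + t \<in> Y \<and> g e - t \<in> Y" using shift[of "g e"] shift[of "g e - t"] by simp
  then have "e + t \<in> Y" using g[of "e + t"] comm e by auto
  then show False using shift[of e] disj e by blast
qed

locale generic_pair =
  fixes a :: real
  assumes four_a_not_Int: "4 * a \<notin> \<int>"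
begin

text \<open>The lift to R of the antipodal pair {a, a + 1/2}.\<close>
definition Apair :: "real set" where
  "Apair = {x. 2 * (x - a) \<in> \<int>}"

lemma two_a_not_Int: "2 * a \<notin> \<int>"
proof
  assume h: "2 * a \<in> \<int>"
  have "4 * a \<in> \<int>" by (rule Ints_combination[OF h h, where i = 2 and j = 0 and k = 0]) simp
  then show False using four_a_not_Int by simp
qed

lemma Apair_not_half_Int: "2 * x \<in> \<int> \<Longrightarrow> x \<notin> Apair"
proof
  assume x: "2 * x \<in> \<int>" and "x \<in> Apair"
  then have xa: "2 * (x - a) \<in> \<int>" by (simp add: Apair_def)
  have "2 * a \<in> \<int>" by (rule Ints_combination[OF x xa, where i = 1 and j = "-1" and k = 0]) simp
  then show False using two_a_not_Int by simp
qed

lemma Apair_shift_half: "x + 1/2 \<in> Apair \<longleftrightarrow> x \<in> Apair"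
proof -
  have "2 * (x + 1/2 - a) = 2 * (x - a) + 1" by simp
  then show ?thesis unfolding Apair_def mem_Collect_eq by (metis add_in_Ints_iff_right Ints_1)
qed

lemma in_W_iff:
  "in_circ_set x {0, a, 1/2, a + 1/2} \<longleftrightarrow> 2 * x \<in> \<int> \<or> x \<in> Apair"
proof -
  have "in_circ_set x {0, a, 1/2, a + 1/2} \<longleftrightarrow>
      (x \<in> \<int> \<or> x - 1/2 \<in> \<int>) \<or> (x - a \<in> \<int> \<or> (x - a) - 1/2 \<in> \<int>)"
    unfolding in_circ_set_def circ_eq_def by (auto simp: diff_diff_eq)
  then show ?thesis unfolding Apair_def mem_Collect_eq double_in_Ints_iff .
qed

lemma Apair_reflection:
  assumes "x \<in> Apair" "- x + 2 * s \<in> Apair" shows "4 * (s - a) \<in> \<int>"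
proof -
  have "2 * (x - a) \<in> \<int>" "2 * (- x + 2 * s - a) \<in> \<int>" using assms by (simp_all add: Apair_def)
  then show ?thesis by (rule Ints_combination[where i = 1 and j = 1 and k = 0]) simp
qed

lemma no_common_center:
  assumes "2 * s \<in> \<int>" shows "4 * (s - a) \<notin> \<int>"
proof
  assume "4 * (s - a) \<in> \<int>"
  with assms have "4 * a \<in> \<int>" by (rule Ints_combination[where i = 2 and j = "-1" and k = 0]) simp
  then show False using four_a_not_Int by simp
qed

text \<open>Only the identity fixes W pointwise: such an element fixes 0, hence is a
  reflection with centre in (1/2)Z, and it fixes a, which is impossible.\<close>
lemma trivial_pointwise_stabilizer: "trivial_pw_stab {0, a, 1/2, a + 1/2}"
  unfolding trivial_pw_stab_def
proof (intro allI impI)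
  fix g assume fix_W: "\<forall>w\<in>{0, a, 1/2, a + 1/2}. circ_eq (o2_act g w) w"
  show "o2_is_id g"
  proof (rule ccontr)
    assume "\<not> o2_is_id g"
    moreover have "o2_act g 0 \<in> \<int>" using fix_W by (simp add: circ_eq_def)
    ultimately obtain s where s: "g = (True, s)" "2 * s \<in> \<int>"
      using integer_return_is_reflection[of 0 g] by auto
    have "o2_act g a - a \<in> \<int>" using fix_W by (simp add: circ_eq_def)
    then have a_s: "- a + 2 * s - a \<in> \<int>" using s(1) by simp
    have "2 * (- a + 2 * s - a) \<in> \<int>"
      by (rule Ints_combination[OF a_s a_s, where i = 2 and j = 0 and k = 0]) simp
    then have "a \<in> Apair" "- a + 2 * s \<in> Apair" by (simp_all add: Apair_def)
    then show False using Apair_reflection no_common_center s(2) by blast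
  qed
qed

end

locale precolored_pair = generic_pair +
  fixes p :: "real \<Rightarrow> color"
  assumes p_periodic: "periodic1 p"
begin

definition col :: "color \<Rightarrow> color \<Rightarrow> real \<Rightarrow> color" where
  "col e d x = (if x \<in> \<int> then e else if 2 * x \<in> \<int> then B else if x \<in> Apair then d else p x)"

text \<open>The set of points showing the pattern (R, B) at x and x + 1/2 in col e d; it does
  not depend on d, and the choice of e only decides whether Z belongs to it.\<close>
definition RB :: "color \<Rightarrow> real set" where
  "RB e = {x. (2 * x \<notin> \<int> \<and> x \<notin> Apair \<and> p x = R \<and> p (x + 1/2) = B)
              \<or> (e = R \<and> x \<in> \<int>)}"

text \<open>Likewise the pattern (R, R); it does not depend on e, and d decides whether the
  pair {a, a + 1/2} belongs to it.\<close>
definition RR :: "color \<Rightarrow> real set" where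
  "RR d = {x. (2 * x \<notin> \<int> \<and> x \<notin> Apair \<and> p x = R \<and> p (x + 1/2) = R)
              \<or> (d = R \<and> x \<in> Apair)}"

lemma col_extends: "\<not> in_circ_set x {0, a, 1/2, a + 1/2} \<Longrightarrow> col e d x = p x"
  by (auto simp: in_W_iff col_def)

lemma col_periodic: "periodic1 (col e d)"
proof -
  have "x + 1 \<in> \<int> \<longleftrightarrow> x \<in> \<int>" "2 * (x + 1) \<in> \<int> \<longleftrightarrow> 2 * x \<in> \<int>"
    "x + 1 \<in> Apair \<longleftrightarrow> x \<in> Apair"
    for x :: real
    using Apair_shift_half[of x] Apair_shift_half[of "x + 1/2"] by (auto simp: algebra_simps)
  then show ?thesis using p_periodic by (simp add: periodic1_def col_def)
qed

lemma col_antipode: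
  "col e d (x + 1/2) =
     (if x \<in> \<int> then B else if 2 * x \<in> \<int> then e else if x \<in> Apair then d else p (x + 1/2))"
proof -
  have "x + 1/2 = (x - 1/2) + 1" by simp
  then have "x + 1/2 \<in> \<int> \<longleftrightarrow> x - 1/2 \<in> \<int>" by (metis add_in_Ints_iff_right Ints_1)
  then have "x + 1/2 \<in> \<int> \<longleftrightarrow> 2 * x \<in> \<int> \<and> x \<notin> \<int>"
    using double_in_Ints_iff[of x] by auto
  moreover have "2 * (x + 1/2) \<in> \<int> \<longleftrightarrow> 2 * x \<in> \<int>"
    by (simp add: algebra_simps)
  ultimately show ?thesis using Apair_shift_half Apair_not_half_Int by (auto simp: col_def)
qed

lemma RB_pattern: "antipodal_pattern (col e d) R B = RB e"
proof (rule set_eqI)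
  fix x :: real
  have "2 * x \<in> \<int>" if "x \<in> \<int>" using that by simp
  then show "x \<in> antipodal_pattern (col e d) R B \<longleftrightarrow> x \<in> RB e"
    unfolding antipodal_pattern_def mem_Collect_eq col_antipode using Apair_not_half_Int[of x]
    by (cases "x \<in> \<int>"; cases "2 * x \<in> \<int>"; cases "x \<in> Apair") (auto simp: RB_def col_def)
qed

lemma RR_pattern: "antipodal_pattern (col e d) R R = RR d"
proof (rule set_eqI)
  fix x :: real
  have "2 * x \<in> \<int>" if "x \<in> \<int>" using that by simp
  then show "x \<in> antipodal_pattern (col e d) R R \<longleftrightarrow> x \<in> RR d"
    unfolding antipodal_pattern_def mem_Collect_eq col_antipode using Apair_not_half_Int[of x]
    by (cases "x \<in> \<int>"; cases "2 * x \<in> \<int>"; cases "x \<in> Apair") (auto simp: RR_def col_def)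
qed

lemma RB_red: "RB R = RB B \<union> \<int>"
  by (auto simp: RB_def)

lemma RB_blue_disjoint: "RB B \<inter> \<int> = {}"
  by (auto simp: RB_def)

lemma RR_red: "RR R = RR B \<union> Apair"
  by (auto simp: RR_def)

lemma RR_blue_disjoint: "RR B \<inter> Apair = {}"
  by (auto simp: RR_def)

lemma RB_antipode: "x \<in> RB B \<Longrightarrow> x + 1/2 \<notin> RB R"
proof -
  have "2 * (x + 1/2) = 2 * x + 1" by simp
  then have "x + 1/2 \<in> \<int> \<Longrightarrow> 2 * x \<in> \<int>"
    by (metis Ints_1 Ints_mult Ints_numeral add_in_Ints_iff_right)
  then show "x \<in> RB B \<Longrightarrow> x + 1/2 \<notin> RB R" by (auto simp: RB_def)
qed

lemma RB_periodic: "x - y \<in> \<int> \<Longrightarrow> x \<in> RB e \<longleftrightarrow> y \<in> RB e"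
  using antipodal_pattern_periodic[OF col_periodic] by (simp add: RB_pattern[symmetric, where d = R])

lemma RR_periodic: "x - y \<in> \<int> \<Longrightarrow> x \<in> RR d \<longleftrightarrow> y \<in> RR d"
  using antipodal_pattern_periodic[OF col_periodic] by (simp add: RR_pattern[symmetric, where e = R])

lemma symmetry_invariants:
  assumes "nontrivial_symmetry (col e d) g"
  shows "o2_invariant g (RB e)" "o2_invariant g (RR d)"
proof -
  have "\<forall>x. col e d (o2_act g x) = col e d x" using assms by (simp add: nontrivial_symmetry_def)
  note pattern_invariant = symmetry_preserves_pattern[OF col_periodic this]
  show "o2_invariant g (RB e)" using pattern_invariant[of R B] by (simp only: RB_pattern)
  show "o2_invariant g (RR d)" using pattern_invariant[of R R] by (simp only: RR_pattern)
qed

lemma integer_point_returns: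
  assumes "e \<noteq> e'" "t \<notin> \<int>" "o2_invariant (False, t) (RB e)" "o2_invariant h (RB e')"
  shows "\<exists>x\<in>\<int>. o2_act h x \<in> \<int>"
proof (cases e)
  case R
  then have "e' = B" using assms(1) by (cases e') auto
  then show ?thesis
    using assms(2-4) R
    by (intro exchange_union_shift_invariant[OF RB_blue_disjoint Ints_0, where g = "o2_act h" and t = t])
      (auto simp: o2_invariant_def RB_red o2_act_shift)
next
  case B
  then have "e' = R" using assms(1) by (cases e') auto
  then show ?thesis
    using assms(2-4) B
    by (intro exchange_part_shift_invariant[OF RB_blue_disjoint Ints_0, where g = "o2_act h" and t = t])
      (auto simp: o2_invariant_def RB_red o2_act_shift)
qed

lemma Apair_point_returns:
  assumes "d \<noteq> d'" "a + t \<notin> Apair" "o2_invariant (False, t) (RR d)" "o2_invariant h (RR d')"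
  shows "\<exists>x\<in>Apair. o2_act h x \<in> Apair"
proof -
  have a: "a \<in> Apair" by (simp add: Apair_def)
  show ?thesis
  proof (cases d)
    case R
    then have "d' = B" using assms(1) by (cases d') auto
    then show ?thesis
      using assms(2-4) R
      by (intro exchange_union_shift_invariant[OF RR_blue_disjoint a, where g = "o2_act h" and t = t])
        (auto simp: o2_invariant_def RR_red o2_act_shift)
  next
    case B
    then have "d' = R" using assms(1) by (cases d') auto
    then show ?thesis
      using assms(2-4) B
      by (intro exchange_part_shift_invariant[OF RR_blue_disjoint a, where g = "o2_act h" and t = t])
        (auto simp: o2_invariant_def RR_red o2_act_shift)
  qed
qed

text \<open>A non-integral translation t preserving RB R moves 0 into RB B, so t is not
  congruent to 1/2 and hence moves the pair {a, a + 1/2} off itself.\<close>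
lemma translation_of_RB_red:
  assumes "t \<notin> \<int>" "o2_invariant (False, t) (RB R)"
  shows "2 * t \<notin> \<int>"
proof -
  have "0 \<in> RB R" by (simp add: RB_red)
  then have "t \<in> RB R" using assms(2) unfolding o2_invariant_def by (metis add_0 o2_act_translation)
  then have "t \<in> RB B" using assms(1) RB_red by blast
  then show ?thesis by (simp add: RB_def)
qed

text \<open>Step 1. When 0 is coloured red, every symmetry is a reflection: a translation
  would force a symmetry h of a coloring with 0 blue to be a reflection both
  through (1/2)Z (by the (R, B) pattern) and through a + (1/4)Z (by the (R, R)
  pattern).\<close>
lemma red_symmetry_is_reflection:
  assumes g: "nontrivial_symmetry (col R d) g" and h: "nontrivial_symmetry (col B d') h"
    and "d \<noteq> d'"
  shows "\<exists>s. g = (True, s)"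
proof (rule ccontr)
  assume "\<nexists>s. g = (True, s)"
  then obtain t where gt: "g = (False, t)" by (metis prod.exhaust)
  then have t: "t \<notin> \<int>" using g by (simp add: nontrivial_symmetry_def translation_is_id_iff)
  have RB: "o2_invariant (False, t) (RB R)" and RR: "o2_invariant (False, t) (RR d)"
    using symmetry_invariants[OF g] gt by simp_all
  obtain x where "x \<in> \<int>" "o2_act h x \<in> \<int>"
    using integer_point_returns[OF _ t RB symmetry_invariants(1)[OF h]] by auto
  then obtain \<sigma> where \<sigma>: "h = (True, \<sigma>)" "2 * \<sigma> \<in> \<int>"
    using integer_return_is_reflection h unfolding nontrivial_symmetry_def by blast
  have "a + t \<notin> Apair" using translation_of_RB_red[OF t RB] by (simp add: Apair_def)
  then obtain x where "x \<in> Apair" "- x + 2 * \<sigma> \<in> Apair"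
    using Apair_point_returns[OF \<open>d \<noteq> d'\<close> _ RR symmetry_invariants(2)[OF h]] \<sigma>(1) by auto
  then show False using Apair_reflection no_common_center[OF \<sigma>(2)] by blast
qed

text \<open>If reflections with centres s1, s2 preserve RR R and RR B respectively and
  2 s1 \<equiv> 2 s2, then they map a into the pair {a, a + 1/2}, so s1 \<in> a + (1/4)Z.\<close>
lemma axes_agree:
  assumes "o2_invariant (True, s1) (RR R)" "o2_invariant (True, s2) (RR B)" "2 * s1 - 2 * s2 \<in> \<int>"
  shows "4 * (s1 - a) \<in> \<int>"
proof -
  have a: "a \<in> Apair" by (simp add: Apair_def)
  then have "- a + 2 * s1 \<in> RR R" using assms(1) RR_red by (auto simp: o2_invariant_def)
  moreover have "- a + 2 * s2 \<notin> RR B" using assms(2) a RR_blue_disjoint by (auto simp: o2_invariant_def)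
  then have "- a + 2 * s1 \<notin> RR B" using RR_periodic[of "- a + 2 * s1" "- a + 2 * s2"] assms(3) by simp
  ultimately have "- a + 2 * s1 \<in> Apair" using RR_red by blast
  then show ?thesis using Apair_reflection a by blast
qed

lemma RB_blue_rigid:
  assumes "4 * (s - a) \<in> \<int>" "o2_invariant (True, s) (RB R)"
    and "t \<notin> \<int>" "o2_invariant (False, t) (RB B)"
  shows False
proof -
  obtain x where "x \<in> \<int>" "o2_act (True, s) x \<in> \<int>"
    using integer_point_returns[of B R, OF _ assms(3,4,2)] by auto
  then have "2 * s \<in> \<int>" using integer_return_is_reflection reflection_not_id by blast
  then show False using no_common_center assms(1) by blast
qed

lemma blue_symmetry_is_reflection:
  assumes "4 * (s - a) \<in> \<int>" "o2_invariant (True, s) (RB R)"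
    and g: "nontrivial_symmetry (col B d) g"
  shows "\<exists>u. g = (True, u)"
proof (rule ccontr)
  assume "\<nexists>u. g = (True, u)"
  then obtain t where gt: "g = (False, t)" by (metis prod.exhaust)
  then have "t \<notin> \<int>" using g by (simp add: nontrivial_symmetry_def translation_is_id_iff)
  moreover have "o2_invariant (False, t) (RB B)" using symmetry_invariants(1)[OF g] gt by simp
  ultimately show False using RB_blue_rigid assms(1,2) by blast
qed

text \<open>Step 2. The two colorings with 0 red have a common reflection symmetry of RB R
  with centre in a + (1/4)Z; otherwise the two reflections compose to a
  non-integral translation preserving RB R, which by the exchange lemma turns the
  symmetries of the blue colorings into reflections through (1/2)Z, and
  axes_agree contradicts no_common_center.\<close>
lemma red_axis:
  assumes RR: "nontrivial_symmetry (col R R) (True, s1)" and RB: "nontrivial_symmetry (col R B) (True, s2)"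
    and BR: "nontrivial_symmetry (col B R) h1" and BB: "nontrivial_symmetry (col B B) h2"
  shows "\<exists>s. 4 * (s - a) \<in> \<int> \<and> o2_invariant (True, s) (RB R)"
proof (cases "2 * s1 - 2 * s2 \<in> \<int>")
  case True
  then show ?thesis
    using axes_agree symmetry_invariants[OF RR] symmetry_invariants[OF RB] by blast
next
  case False
  have RB: "o2_invariant (False, 2 * s1 - 2 * s2) (RB R)"
    using reflections_compose symmetry_invariants(1)[OF RR] symmetry_invariants(1)[OF RB] by blast
  have "\<exists>u. h = (True, u) \<and> 2 * u \<in> \<int>" if h: "nontrivial_symmetry (col B d) h" for d h
  proof -
    obtain x where "x \<in> \<int>" "o2_act h x \<in> \<int>"
      using integer_point_returns[OF _ False RB symmetry_invariants(1)[OF h]] by auto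
    then show ?thesis using integer_return_is_reflection h unfolding nontrivial_symmetry_def by blast
  qed
  then obtain u1 u2 where u: "h1 = (True, u1)" "2 * u1 \<in> \<int>" "h2 = (True, u2)" "2 * u2 \<in> \<int>"
    using BR BB by meson
  then have "4 * (u1 - a) \<in> \<int>"
    using axes_agree symmetry_invariants(2)[OF BR] symmetry_invariants(2)[OF BB] by simp
  then show ?thesis using no_common_center u(2) by blast
qed

lemma blue_axis:
  assumes "4 * (s - a) \<in> \<int>" "o2_invariant (True, s) (RB R)"
    and BR: "nontrivial_symmetry (col B R) (True, u1)" and BB: "nontrivial_symmetry (col B B) (True, u2)"
  shows "4 * (u1 - a) \<in> \<int>"
proof -
  have "2 * u1 - 2 * u2 \<in> \<int>"
    using RB_blue_rigid[OF assms(1,2)] reflections_compose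
      symmetry_invariants(1)[OF BR] symmetry_invariants(1)[OF BB] by blast
  then show ?thesis using axes_agree symmetry_invariants(2)[OF BR] symmetry_invariants(2)[OF BB] by blast
qed

text \<open>Step 5. The reflections from Steps 2 and 4 cannot coexist: they map 0 via RB R to
  2s \<in> RB B, then to a point of RB B that is either an integer or, after reflecting
  back, the antipode 2s + 1/2, which would lie in RB R.\<close>
lemma axes_incompatible:
  assumes s: "4 * (s - a) \<in> \<int>" "o2_invariant (True, s) (RB R)"
    and u: "4 * (u - a) \<in> \<int>" "o2_invariant (True, u) (RB B)"
  shows False
proof -
  have "2 * s \<notin> \<int>" using no_common_center s(1) by blast
  moreover have "2 * s \<in> RB R"
    using s(2) RB_red unfolding o2_invariant_def by (metis UnI2 Ints_0 add_0 minus_zero o2_act_reflection)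
  ultimately have s_blue: "2 * s \<in> RB B" using RB_red by blast
  define y where "y = - (2 * s) + 2 * u"
  have y: "y \<in> RB B" using s_blue u(2) by (simp add: y_def o2_invariant_def)
  have "2 * (2 * u - 2 * s) \<in> \<int>" using Ints_combination[OF u(1) s(1), where i = 1 and j = "-1" and k = 0] by simp
  then consider "2 * u - 2 * s \<in> \<int>" | "2 * u - 2 * s - 1/2 \<in> \<int>" using double_in_Ints_iff by blast
  then show False
  proof cases
    case 1
    then show False using y RB_blue_disjoint by (auto simp: y_def)
  next
    case 2
    have "y \<in> RB R" using y RB_red by blast
    then have "- y + 2 * s \<in> RB R" using s(2) unfolding o2_invariant_def by (metis o2_act_reflection)
    moreover have "(- y + 2 * s) - (2 * s + 1/2) \<in> \<int>"
      by (rule Ints_combination[OF 2 2, where i = "-1" and j = 0 and k = "-1"]) (simp add: y_def)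
    ultimately have "2 * s + 1/2 \<in> RB R" using RB_periodic by blast
    then show False using RB_antipode s_blue by blast
  qed
qed

lemma exists_distinguishing: "\<exists>e d. distinguishing (col e d)"
proof (rule ccontr)
  assume "\<nexists>e d. distinguishing (col e d)"
  then have "\<exists>g. nontrivial_symmetry (col e d) g" for e d using distinguishing_iff by blast
  then obtain gRR gRB gBR gBB where
    RR: "nontrivial_symmetry (col R R) gRR" and RB: "nontrivial_symmetry (col R B) gRB" and
    BR: "nontrivial_symmetry (col B R) gBR" and BB: "nontrivial_symmetry (col B B) gBB" by meson
  obtain s1 s2 where "gRR = (True, s1)" "gRB = (True, s2)"
    using red_symmetry_is_reflection[OF RR BB] red_symmetry_is_reflection[OF RB BR] by blast
  then obtain s where s: "4 * (s - a) \<in> \<int>" "o2_invariant (True, s) (RB R)"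
    using red_axis RR RB BR BB by blast
  obtain u1 u2 where u: "gBR = (True, u1)" "gBB = (True, u2)"
    using blue_symmetry_is_reflection[OF s BR] blue_symmetry_is_reflection[OF s BB] by blast
  then have "4 * (u1 - a) \<in> \<int>" using blue_axis[OF s] BR BB by simp
  moreover have "o2_invariant (True, u1) (RB B)" using symmetry_invariants(1) BR u(1) by simp
  ultimately show False using axes_incompatible[OF s] by blast
qed

end

theorem lemma2p3p4:
  fixes a :: real
  assumes "\<not> circ_eq a 0" and "\<not> circ_eq a (1/2)"
    and "\<not> circ_eq a (1/4)" and "\<not> circ_eq a (-1/4)"
  shows "prop_P {0, a, 1/2, a + 1/2}"
proof -
  have "4 * a \<notin> \<int>" using assms by (intro four_times_not_Int) (simp_all add: circ_eq_def)
  then interpret generic_pair a by unfold_locales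
  show ?thesis unfolding prop_P_def
  proof (intro conjI allI impI trivial_pointwise_stabilizer)
    fix p :: "real \<Rightarrow> color"
    assume "periodic1 p"
    then interpret precolored_pair a p by unfold_locales
    obtain e d where "distinguishing (col e d)" using exists_distinguishing by blast
    then show "\<exists>c. periodic1 c \<and> (\<forall>x. \<not> in_circ_set x {0, a, 1/2, a + 1/2} \<longrightarrow> c x = p x)
        \<and> distinguishing c"
      using col_periodic col_extends by blast
  qed
qed

end
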